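(* Let $T$ be a tree on $n\ge 2$ vertices, let $k\ge 2$, and let $M$ be the order-$k$ Steiner distance hypermatrix of $T$. For any vector $\mathbf{c}\in\mathbb{R}^n$ write $C=\mathbf{c}^T\mathbb{J}=\sum_{i=1}^n c_i$ and, for each edge $e\in E(T)$, $\alpha_e=\mathbf{c}^T\mathbf{a}_e=\sum_{i\in A(e)}c_i$. Then $$M(\mathbf{c},\ldots,\mathbf{c})=\sum_{e\in E(T)}\left(C^k-\alpha_e^k-(C-\alpha_e)^k\right).$$
   Context: $T$ is a tree with vertex set $\{1,\dots,n\}$ and edge set $E(T)$. For $U\subseteq V(T)$, the Steiner distance $S(U)$ is the minimum number of edges of a connected subgraph of $T$ whose vertex set contains $U$. The order-$k$ Steiner distance hypermatrix $M$ of $T$ has entries $M_{(i_1,\dots,i_k)}=S(\{i_1,\dots,i_k\})$ for $(i_1,\dots,i_k)\in V(T)^k$, and for vectors $\mathbf{x}_1,\dots,\mathbf{x}_k\in\mathbb{R}^n$ one writes $M(\mathbf{x}_1,\dots,\mathbf{x}_k)=\sum_{\mathbf{i}\in V(T)^k}M_{\mathbf{i}}\prod_{j=1}^k x_{j i_j}$, where $x_{ji}$ is the $i$-th component of $\mathbf{x}_j$. For an edge $e$, $A(e)$ and $B(e)$ are the vertex sets of the two components of $T-e$ (labeled arbitrarily), and $\mathbf{a}_e\in\mathbb{R}^n$ is the indicator vector of $A(e)$. $\mathbb{J}$ denotes the all-ones vector in $\mathbb{R}^n$. *)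

theory Defs
  imports "HOL-Analysis.Analysis"
begin

definition adj_rel :: "nat set set \<Rightarrow> (nat \<times> nat) set" where
  "adj_rel F = {(a, b). {a, b} \<in> F}"

definition is_connected :: "nat set \<Rightarrow> nat set set \<Rightarrow> bool" where
  "is_connected W F \<longleftrightarrow> (\<forall>x\<in>W. \<forall>y\<in>W. (x, y) \<in> (adj_rel F)\<^sup>*)"

definition is_graph :: "nat set \<Rightarrow> nat set set \<Rightarrow> bool" where
  "is_graph V E \<longleftrightarrow> (\<forall>e\<in>E. e \<subseteq> V \<and> card e = 2)"

definition is_tree :: "nat set \<Rightarrow> nat set set \<Rightarrow> bool" where
  "is_tree V E \<longleftrightarrow> finite V \<and> is_graph V E \<and> is_connected V E \<and> card E = card V - 1"

definition steiner :: "nat set \<Rightarrow> nat set set \<Rightarrow> nat set \<Rightarrow> nat" where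
  "steiner V E U = (LEAST m. \<exists>W F. W \<subseteq> V \<and> F \<subseteq> E \<and> (\<forall>e\<in>F. e \<subseteq> W) \<and> U \<subseteq> W
       \<and> is_connected W F \<and> card F = m)"

definition component :: "nat set \<Rightarrow> nat set set \<Rightarrow> nat \<Rightarrow> nat set" where
  "component V F u = {v \<in> V. (u, v) \<in> (adj_rel F)\<^sup>*}"

text \<open>M(c,...,c) for the order-k Steiner distance hypermatrix of (V,E), with V = {1..n};
  index tuples (i_1,...,i_k) are functions f : {0..<k} -> {1..n}.\<close>
definition steiner_form :: "nat \<Rightarrow> nat set set \<Rightarrow> nat \<Rightarrow> (nat \<Rightarrow> real) \<Rightarrow> real" where
  "steiner_form n E k c =
     (\<Sum>f \<in> PiE {..<k} (\<lambda>_. {1..n}).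
        real (steiner {1..n} E (f ` {..<k})) * (\<Prod>j<k. c (f j)))"

end

theory Submission
  imports Defs
begin

text \<open>Every edge e of a tree is a bridge, since a connected graph on |V| vertices needs at
  least |V| - 1 edges. Hence a subtree spans U exactly when it contains every edge separating U,
  i.e. every e with U meeting both A(e) and its complement, and the minimal one contains nothing
  else: S(U) is the number of separating edges. Summing the indicator of "e separates U" against
  c(i_1)...c(i_k) over all tuples gives C^k minus the tuples inside A(e) and inside its complement.\<close>

subsection \<open>Connectivity\<close>

lemma sym_adj_rel: "sym (adj_rel F)"
  by (auto simp: sym_def adj_rel_def insert_commute)

lemma adj_rel_rtrancl_sym: "(x, y) \<in> (adj_rel F)\<^sup>* \<Longrightarrow> (y, x) \<in> (adj_rel F)\<^sup>*"
  using sym_rtrancl[OF sym_adj_rel] unfolding sym_def by blast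

lemma adj_rel_rtrancl_mono: "F \<subseteq> G \<Longrightarrow> (adj_rel F)\<^sup>* \<subseteq> (adj_rel G)\<^sup>*"
  by (rule rtrancl_mono) (auto simp: adj_rel_def)

lemma component_eq:
  assumes "(u, w) \<in> (adj_rel F)\<^sup>*"
  shows "component V F u = component V F w"
proof -
  have "(u, v) \<in> (adj_rel F)\<^sup>* \<longleftrightarrow> (w, v) \<in> (adj_rel F)\<^sup>*" for v
    using assms adj_rel_rtrancl_sym[OF assms] rtrancl_trans by metis
  thus ?thesis unfolding component_def by blast
qed

lemma component_edge_iff:
  assumes "{x, y} \<in> F" "x \<in> V" "y \<in> V"
  shows "x \<in> component V F u \<longleftrightarrow> y \<in> component V F u"
proof -
  have "(x, y) \<in> adj_rel F" "(y, x) \<in> adj_rel F"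
    using assms(1) by (auto simp: adj_rel_def insert_commute)
  hence "(u, x) \<in> (adj_rel F)\<^sup>* \<longleftrightarrow> (u, y) \<in> (adj_rel F)\<^sup>*"
    by (meson rtrancl.rtrancl_into_rtrancl)
  thus ?thesis using assms(2,3) unfolding component_def by blast
qed

lemma rtrancl_adj_rel_insert:
  assumes "(x, z) \<in> (adj_rel (insert {a, b} F))\<^sup>*"
  defines "R \<equiv> (adj_rel F)\<^sup>*"
  shows "(x, z) \<in> R \<or> (x, a) \<in> R \<and> (b, z) \<in> R \<or> (x, b) \<in> R \<and> (a, z) \<in> R"
  using assms(1)
proof (induction rule: rtrancl_induct)
  case base
  show ?case by (simp add: R_def)
next
  case (step y z)
  show ?case
  proof (cases "(y, z) \<in> adj_rel F")
    case True
    then show ?thesis using step.IH unfolding R_def by (meson rtrancl.rtrancl_into_rtrancl)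
  next
    case False
    with step.hyps(2) have "y = a \<and> z = b \<or> y = b \<and> z = a"
      by (auto simp: adj_rel_def doubleton_eq_iff)
    then show ?thesis using step.IH adj_rel_rtrancl_sym rtrancl_trans unfolding R_def by blast
  qed
qed

definition graph_components :: "nat set \<Rightarrow> nat set set \<Rightarrow> nat set set" where
  "graph_components V F = component V F ` V"

text \<open>Adding the edge {a, b} merges at most two components: every component other than that of b
  still determines a distinct component afterwards.\<close>
lemma card_graph_components_insert_edge:
  assumes "a \<in> V" "b \<in> V" "finite V"
  shows "card (graph_components V F) \<le> card (graph_components V (insert {a, b} F)) + 1"
proof -
  let ?F' = "insert {a, b} F"
  let ?R = "(adj_rel F)\<^sup>*"
  define G where "G = (\<lambda>C. component V ?F' (SOME x. x \<in> C))"
  have G: "G (component V F u) = component V ?F' u" if "u \<in> V" for u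
  proof -
    have "u \<in> component V F u" using that by (simp add: component_def)
    hence "(SOME x. x \<in> component V F u) \<in> component V F u" by (rule someI)
    hence "(u, SOME x. x \<in> component V F u) \<in> (adj_rel ?F')\<^sup>*"
      using adj_rel_rtrancl_mono[OF subset_insertI] by (auto simp: component_def)
    thus ?thesis unfolding G_def using component_eq by metis
  qed
  have "inj_on G (graph_components V F - {component V F b})"
  proof (rule inj_onI)
    fix C1 C2
    assume C: "C1 \<in> graph_components V F - {component V F b}" "C2 \<in> graph_components V F - {component V F b}"
      and "G C1 = G C2"
    obtain x1 x2 where x: "x1 \<in> V" "C1 = component V F x1" "x2 \<in> V" "C2 = component V F x2"
      using C(1,2) unfolding graph_components_def by blast
    have "component V ?F' x1 = component V ?F' x2"
      using \<open>G C1 = G C2\<close> x G by simp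
    moreover have "x2 \<in> component V ?F' x2"
      using x(3) by (simp add: component_def)
    ultimately have "x2 \<in> component V ?F' x1" by simp
    hence "(x1, x2) \<in> ?R \<or> (x1, a) \<in> ?R \<and> (b, x2) \<in> ?R \<or> (x1, b) \<in> ?R \<and> (a, x2) \<in> ?R"
      by (intro rtrancl_adj_rel_insert) (simp add: component_def)
    moreover have "(b, x1) \<notin> ?R" "(b, x2) \<notin> ?R"
      using C x component_eq[of b _ F V] by auto
    ultimately have "(x1, x2) \<in> ?R" using adj_rel_rtrancl_sym by blast
    thus "C1 = C2" using x component_eq by metis
  qed
  moreover have "G ` (graph_components V F - {component V F b}) \<subseteq> graph_components V ?F'"
    using G unfolding graph_components_def by blast
  moreover have "finite (graph_components V ?F')" "finite (graph_components V F)"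
    using assms(3) unfolding graph_components_def by simp_all
  ultimately have "card (graph_components V F - {component V F b}) \<le> card (graph_components V ?F')"
    using card_inj_on_le by blast
  moreover have "component V F b \<in> graph_components V F"
    using assms(2) unfolding graph_components_def by simp
  ultimately show ?thesis
    using \<open>finite (graph_components V F)\<close> by (simp add: card_Diff_singleton)
qed

lemma card_le_card_edges_plus_card_graph_components:
  assumes "finite F" "\<forall>f\<in>F. f \<subseteq> V \<and> card f = 2" "finite V"
  shows "card V \<le> card F + card (graph_components V F)"
  using assms
proof (induction F rule: finite_induct)
  case empty
  have "graph_components V {} = (\<lambda>u. {u}) ` V"
    by (auto simp: graph_components_def component_def adj_rel_def)
  moreover have "card ((\<lambda>u. {u}) ` V) = card V"
    by (rule card_image) (auto simp: inj_on_def)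
  ultimately show ?case by simp
next
  case (insert e F)
  obtain a b where ab: "e = {a, b}" "a \<in> V" "b \<in> V"
    using insert.prems(1) by (metis card_2_iff insert_iff insert_subset)
  have "card V \<le> card F + card (graph_components V F)" using insert by auto
  also have "\<dots> \<le> card F + card (graph_components V (insert e F)) + 1"
    using card_graph_components_insert_edge[OF ab(2,3) insert.prems(2)] ab(1) by simp
  finally show ?case using insert by simp
qed

lemma connected_card_le_card_edges:
  assumes "finite F" "\<forall>f\<in>F. f \<subseteq> V \<and> card f = 2" "finite V" "is_connected V F" "V \<noteq> {}"
  shows "card V \<le> card F + 1"
proof -
  have "graph_components V F = {V}"
    using assms(4,5) unfolding graph_components_def component_def is_connected_def by blast
  thus ?thesis using card_le_card_edges_plus_card_graph_components[OF assms(1-3)] by simp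
qed

subsection \<open>Edges of a tree\<close>

lemma tree_finite_edges: "is_tree V E \<Longrightarrow> finite E"
  unfolding is_tree_def is_graph_def by (metis finite_Pow_iff finite_subset PowI subsetI)

lemma tree_edge_is_bridge:
  assumes T: "is_tree V E" and e: "{u, v} \<in> E"
  shows "(u, v) \<notin> (adj_rel (E - {{u, v}}))\<^sup>*"
proof
  let ?E' = "E - {{u, v}}"
  assume uv: "(u, v) \<in> (adj_rel ?E')\<^sup>*"
  have "adj_rel E \<subseteq> (adj_rel ?E')\<^sup>*"
  proof
    fix p assume "p \<in> adj_rel E"
    then obtain x y where p: "p = (x, y)" "{x, y} \<in> E" by (auto simp: adj_rel_def)
    show "p \<in> (adj_rel ?E')\<^sup>*"
    proof (cases "{x, y} = {u, v}")
      case True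
      then show ?thesis using uv adj_rel_rtrancl_sym[OF uv] p by (auto simp: doubleton_eq_iff)
    next
      case False
      then show ?thesis using p by (auto simp: adj_rel_def)
    qed
  qed
  hence "is_connected V ?E'"
    using T rtrancl_subset_rtrancl unfolding is_tree_def is_connected_def by blast
  moreover have "finite ?E'" "finite V" "V \<noteq> {}" "\<forall>f\<in>?E'. f \<subseteq> V \<and> card f = 2"
    using T e tree_finite_edges[OF T] unfolding is_tree_def is_graph_def by auto
  ultimately have "card V \<le> card ?E' + 1"
    by (intro connected_card_le_card_edges)
  moreover have "card ?E' = card E - 1" "card E > 0"
    using e tree_finite_edges[OF T] card_gt_0_iff by (auto simp: card_Diff_singleton)
  moreover have "card E = card V - 1" using T unfolding is_tree_def by blast
  ultimately show False by linarith
qed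

text \<open>A walk between two vertices of S can leave S only across {s, t}, and must come back
  the same way; meanwhile s stays reachable inside S.\<close>
lemma rtrancl_adj_rel_restrict_side:
  assumes closed: "\<forall>x y. {x, y} \<in> F - {{s, t}} \<longrightarrow> (x \<in> S \<longleftrightarrow> y \<in> S)"
    and "s \<in> S" "t \<notin> S"
    and walk: "(x, z) \<in> (adj_rel F)\<^sup>*" and "x \<in> S" "z \<in> S"
  shows "(x, z) \<in> (adj_rel {f \<in> F. f \<subseteq> S})\<^sup>*"
proof -
  let ?R = "(adj_rel {f \<in> F. f \<subseteq> S})\<^sup>*"
  from walk have "(z \<in> S \<longrightarrow> (x, z) \<in> ?R) \<and> (z \<notin> S \<longrightarrow> (x, s) \<in> ?R)"
  proof (induction rule: rtrancl_induct)
    case base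
    then show ?case using \<open>x \<in> S\<close> by simp
  next
    case (step y z)
    then have yz: "{y, z} \<in> F" by (simp add: adj_rel_def)
    show ?case
    proof (cases "{y, z} = {s, t}")
      case True
      then show ?thesis using step.IH \<open>s \<in> S\<close> \<open>t \<notin> S\<close> by (auto simp: doubleton_eq_iff)
    next
      case False
      with yz closed have "y \<in> S \<longleftrightarrow> z \<in> S" by blast
      moreover have "y \<in> S \<Longrightarrow> (y, z) \<in> adj_rel {f \<in> F. f \<subseteq> S}"
        using yz calculation by (simp add: adj_rel_def)
      ultimately show ?thesis using step.IH by (meson rtrancl.rtrancl_into_rtrancl)
    qed
  qed
  thus ?thesis using \<open>z \<in> S\<close> by simp
qed

lemma is_connected_restrict_side:
  assumes "is_connected W F" "\<forall>x y. {x, y} \<in> F - {{s, t}} \<longrightarrow> (x \<in> S \<longleftrightarrow> y \<in> S)"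
    and "s \<in> S" "t \<notin> S"
  shows "is_connected (W \<inter> S) {f \<in> F. f \<subseteq> S}"
  unfolding is_connected_def
proof (intro ballI)
  fix x y assume xy: "x \<in> W \<inter> S" "y \<in> W \<inter> S"
  with assms(1) have "(x, y) \<in> (adj_rel F)\<^sup>*" unfolding is_connected_def by blast
  with xy show "(x, y) \<in> (adj_rel {f \<in> F. f \<subseteq> S})\<^sup>*"
    using rtrancl_adj_rel_restrict_side[OF assms(2-4)] by blast
qed

subsection \<open>Steiner distance in a tree\<close>

definition connected_cover ::
    "nat set \<Rightarrow> nat set set \<Rightarrow> nat set \<Rightarrow> nat set \<Rightarrow> nat set set \<Rightarrow> bool" where
  "connected_cover V E U W F \<longleftrightarrow>
     W \<subseteq> V \<and> F \<subseteq> E \<and> (\<forall>e\<in>F. e \<subseteq> W) \<and> U \<subseteq> W \<and> is_connected W F"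

lemma steiner_conv_Least:
  "steiner V E U = (LEAST m. \<exists>W F. connected_cover V E U W F \<and> card F = m)"
  unfolding steiner_def connected_cover_def by (simp add: conj_assoc)

definition separating_edges :: "nat set set \<Rightarrow> (nat set \<Rightarrow> nat set) \<Rightarrow> nat set \<Rightarrow> nat set set" where
  "separating_edges E A U = {e \<in> E. U \<inter> A e \<noteq> {} \<and> U - A e \<noteq> {}}"

locale tree_cuts =
  fixes V :: "nat set" and E :: "nat set set" and A :: "nat set \<Rightarrow> nat set"
  assumes tree: "is_tree V E"
    and cut_side: "\<forall>e\<in>E. \<exists>u\<in>e. A e = component V (E - {e}) u"
begin

lemma edge_subset: "e \<in> E \<Longrightarrow> e \<subseteq> V"
  using tree unfolding is_tree_def is_graph_def by blast

lemma cut_side_subset: "e \<in> E \<Longrightarrow> A e \<subseteq> V"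
  using cut_side unfolding component_def by blast

lemma cut_side_edge_iff:
  assumes "e \<in> E" "{x, y} \<in> E - {e}"
  shows "x \<in> A e \<longleftrightarrow> y \<in> A e"
proof -
  obtain u where "A e = component V (E - {e}) u" using cut_side assms(1) by blast
  moreover have "x \<in> V" "y \<in> V" using edge_subset assms(2) by auto
  ultimately show ?thesis using component_edge_iff assms(2) by metis
qed

lemma edge_crosses_cut:
  assumes "e \<in> E"
  obtains s t where "e = {s, t}" "s \<in> A e" "t \<in> V - A e"
proof -
  obtain u where u: "u \<in> e" "A e = component V (E - {e}) u" using cut_side assms by blast
  moreover have "card e = 2" using tree assms unfolding is_tree_def is_graph_def by blast
  ultimately obtain v where e: "e = {u, v}"
    by (metis card_2_iff doubleton_eq_iff insertE singletonD)
  have "u \<in> V" "v \<in> V" using edge_subset assms e by auto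
  moreover have "(u, v) \<notin> (adj_rel (E - {e}))\<^sup>*"
    using tree_edge_is_bridge tree assms e by blast
  ultimately show ?thesis using that e u(2) by (simp add: component_def)
qed

lemma separating_edges_subset_cover:
  assumes "connected_cover V E U W F"
  shows "separating_edges E A U \<subseteq> F"
proof
  fix e assume e: "e \<in> separating_edges E A U"
  show "e \<in> F"
  proof (rule ccontr)
    assume "e \<notin> F"
    with assms have "F \<subseteq> E - {e}" by (auto simp: connected_cover_def)
    obtain x y where xy: "x \<in> U" "x \<in> A e" "y \<in> U" "y \<notin> A e"
      using e by (auto simp: separating_edges_def)
    have "y \<in> V" using assms xy by (auto simp: connected_cover_def)
    have "(x, y) \<in> (adj_rel F)\<^sup>*"
      using assms xy unfolding connected_cover_def is_connected_def by blast
    hence "(x, y) \<in> (adj_rel (E - {e}))\<^sup>*"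
      using adj_rel_rtrancl_mono[OF \<open>F \<subseteq> E - {e}\<close>] by blast
    moreover obtain u where u: "A e = component V (E - {e}) u"
      using cut_side e by (auto simp: separating_edges_def)
    moreover have "(u, x) \<in> (adj_rel (E - {e}))\<^sup>*"
      using xy(2) u by (simp add: component_def)
    ultimately have "(u, y) \<in> (adj_rel (E - {e}))\<^sup>*" by (meson rtrancl_trans)
    thus False using xy(4) u \<open>y \<in> V\<close> by (simp add: component_def)
  qed
qed

lemma nonseparating_edge_side:
  assumes "e \<in> E" "e \<notin> separating_edges E A U" "U \<subseteq> V"
  obtains S s t where "U \<subseteq> S" "e = {s, t}" "s \<in> S" "t \<notin> S"
    "\<forall>x y. {x, y} \<in> E - {e} \<longrightarrow> (x \<in> S \<longleftrightarrow> y \<in> S)"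
proof -
  obtain s t where st: "e = {s, t}" "s \<in> A e" "t \<in> V - A e"
    using edge_crosses_cut assms(1) .
  have closed: "\<forall>x y. {x, y} \<in> E - {e} \<longrightarrow> (x \<in> A e \<longleftrightarrow> y \<in> A e)"
    using cut_side_edge_iff assms(1) by blast
  have "U \<subseteq> A e \<or> U \<subseteq> V - A e"
    using assms by (auto simp: separating_edges_def)
  then show ?thesis
  proof
    assume "U \<subseteq> A e"
    then show ?thesis using that[of "A e" s t] st closed by blast
  next
    assume "U \<subseteq> V - A e"
    moreover have "e = {t, s}" "t \<in> V - A e" "s \<notin> V - A e" using st by auto
    moreover have "\<forall>x y. {x, y} \<in> E - {e} \<longrightarrow> (x \<in> V - A e \<longleftrightarrow> y \<in> V - A e)"
      using closed edge_subset by blast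
    ultimately show ?thesis by (rule that)
  qed
qed

text \<open>Restricting a minimal cover to the side of a nonseparating edge e that contains U
  would give a smaller cover.\<close>
lemma minimal_cover_subset_separating_edges:
  assumes cover: "connected_cover V E U W F" and min: "card F = steiner V E U" and "U \<subseteq> V"
  shows "F \<subseteq> separating_edges E A U"
proof
  fix e assume "e \<in> F"
  show "e \<in> separating_edges E A U"
  proof (rule ccontr)
    assume "e \<notin> separating_edges E A U"
    moreover have "e \<in> E" "F \<subseteq> E" using cover \<open>e \<in> F\<close> by (auto simp: connected_cover_def)
    ultimately obtain S s t where S: "U \<subseteq> S" "e = {s, t}" "s \<in> S" "t \<notin> S"
      "\<forall>x y. {x, y} \<in> E - {e} \<longrightarrow> (x \<in> S \<longleftrightarrow> y \<in> S)"
      using nonseparating_edge_side \<open>U \<subseteq> V\<close> by blast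
    let ?F' = "{f \<in> F. f \<subseteq> S}"
    have "is_connected W F" using cover by (simp add: connected_cover_def)
    moreover have "\<forall>x y. {x, y} \<in> F - {{s, t}} \<longrightarrow> (x \<in> S \<longleftrightarrow> y \<in> S)"
      using S(2,5) \<open>F \<subseteq> E\<close> by blast
    ultimately have "is_connected (W \<inter> S) ?F'"
      using S(3,4) by (rule is_connected_restrict_side)
    with cover S(1) have "connected_cover V E U (W \<inter> S) ?F'"
      by (auto simp: connected_cover_def)
    hence "steiner V E U \<le> card ?F'"
      unfolding steiner_conv_Least by (intro Least_le) blast
    moreover have "card ?F' < card F"
    proof (rule psubset_card_mono)
      show "finite F" using \<open>F \<subseteq> E\<close> tree_finite_edges[OF tree] finite_subset by blast
      have "\<not> e \<subseteq> S" using S(2,4) by simp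
      thus "?F' \<subset> F" using \<open>e \<in> F\<close> by blast
    qed
    ultimately show False using min by linarith
  qed
qed

lemma steiner_eq_card_separating_edges:
  assumes "U \<subseteq> V"
  shows "steiner V E U = card (separating_edges E A U)"
proof -
  have "connected_cover V E U V E"
    using tree assms unfolding connected_cover_def is_tree_def is_graph_def by blast
  then obtain W F where cover: "connected_cover V E U W F" "card F = steiner V E U"
    unfolding steiner_conv_Least by (smt (verit) LeastI)
  hence "F = separating_edges E A U"
    using minimal_cover_subset_separating_edges[OF _ _ assms] separating_edges_subset_cover
    by (intro subset_antisym) simp_all
  thus ?thesis using cover by simp
qed

lemma steiner_eq_sum_separating:
  assumes "U \<subseteq> V"
  shows "real (steiner V E U) = (\<Sum>e\<in>E. if U \<inter> A e \<noteq> {} \<and> U - A e \<noteq> {} then 1 else 0)"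
  using steiner_eq_card_separating_edges[OF assms] tree_finite_edges[OF tree]
  by (simp add: separating_edges_def sum.inter_filter[symmetric])

end


subsection \<open>Sums over index tuples\<close>

lemma sum_PiE_prod_eq_power:
  fixes c :: "'a \<Rightarrow> 'b::comm_semiring_1"
  assumes "finite K" "finite S"
  shows "(\<Sum>f\<in>PiE K (\<lambda>_. S). \<Prod>j\<in>K. c (f j)) = (\<Sum>i\<in>S. c i) ^ card K"
  using prod_sum_PiE[of K "\<lambda>_. S" "\<lambda>_. c"] assms by simp

lemma sum_PiE_image_subset:
  fixes c :: "'a \<Rightarrow> 'b::comm_semiring_1"
  assumes "finite K" "finite V" "S \<subseteq> V"
  shows "(\<Sum>f\<in>PiE K (\<lambda>_. V). if f ` K \<subseteq> S then \<Prod>j\<in>K. c (f j) else 0)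
    = (\<Sum>i\<in>S. c i) ^ card K"
proof -
  have "{f \<in> PiE K (\<lambda>_. V). f ` K \<subseteq> S} = PiE K (\<lambda>_. S)"
    using assms(3) by (auto simp: PiE_iff image_subset_iff extensional_def)
  hence "(\<Sum>f\<in>PiE K (\<lambda>_. V). if f ` K \<subseteq> S then \<Prod>j\<in>K. c (f j) else 0)
      = (\<Sum>f\<in>PiE K (\<lambda>_. S). \<Prod>j\<in>K. c (f j))"
    using assms(1,2) by (simp add: sum.inter_filter[symmetric] finite_PiE)
  also have "\<dots> = (\<Sum>i\<in>S. c i) ^ card K"
    using assms finite_subset by (intro sum_PiE_prod_eq_power) auto
  finally show ?thesis .
qed

text \<open>Inclusion-exclusion: since K is nonempty, a tuple lies inside S, inside V - S, or meets
  both, and exactly one of these holds.\<close>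
lemma sum_PiE_image_straddles:
  fixes c :: "'a \<Rightarrow> 'b::comm_ring_1"
  assumes "finite K" "K \<noteq> {}" "finite V" "S \<subseteq> V"
  shows "(\<Sum>f\<in>PiE K (\<lambda>_. V). if f ` K \<inter> S \<noteq> {} \<and> f ` K - S \<noteq> {} then \<Prod>j\<in>K. c (f j) else 0)
    = (\<Sum>i\<in>V. c i) ^ card K - (\<Sum>i\<in>S. c i) ^ card K - ((\<Sum>i\<in>V. c i) - (\<Sum>i\<in>S. c i)) ^ card K"
proof -
  let ?p = "\<lambda>f. \<Prod>j\<in>K. c (f j)"
  have split: "(if f ` K \<inter> S \<noteq> {} \<and> f ` K - S \<noteq> {} then ?p f else 0)
      = ?p f - (if f ` K \<subseteq> S then ?p f else 0) - (if f ` K \<subseteq> V - S then ?p f else 0)"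
    if "f \<in> PiE K (\<lambda>_. V)" for f
    using that assms(2) by (auto simp: PiE_iff)
  have "(\<Sum>f\<in>PiE K (\<lambda>_. V). if f ` K \<inter> S \<noteq> {} \<and> f ` K - S \<noteq> {} then ?p f else 0)
    = (\<Sum>f\<in>PiE K (\<lambda>_. V). ?p f) - (\<Sum>f\<in>PiE K (\<lambda>_. V). if f ` K \<subseteq> S then ?p f else 0)
      - (\<Sum>f\<in>PiE K (\<lambda>_. V). if f ` K \<subseteq> V - S then ?p f else 0)"
    by (simp only: sum.cong[OF refl split] sum_subtractf)
  also have "\<dots> = (\<Sum>i\<in>V. c i) ^ card K - (\<Sum>i\<in>S. c i) ^ card K - (\<Sum>i\<in>V - S. c i) ^ card K"
    using assms by (simp add: sum_PiE_prod_eq_power sum_PiE_image_subset)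
  also have "(\<Sum>i\<in>V - S. c i) = (\<Sum>i\<in>V. c i) - (\<Sum>i\<in>S. c i)"
    using assms(3,4) by (simp add: sum_diff)
  finally show ?thesis .
qed

theorem theorem1:
  fixes n k :: nat and E :: "nat set set" and c :: "nat \<Rightarrow> real"
    and A :: "nat set \<Rightarrow> nat set"
  assumes "n \<ge> 2" and "k \<ge> 2"
    and "is_tree {1..n} E"
    and "\<forall>e\<in>E. \<exists>u\<in>e. A e = component {1..n} (E - {e}) u"
  shows "steiner_form n E k c =
    (\<Sum>e\<in>E. (\<Sum>i=1..n. c i) ^ k - (\<Sum>i\<in>A e. c i) ^ k
             - ((\<Sum>i=1..n. c i) - (\<Sum>i\<in>A e. c i)) ^ k)"
proof -
  interpret tree_cuts "{1..n}" E A using assms(3,4) by unfold_locales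
  let ?P = "PiE {..<k} (\<lambda>_. {1..n})"
  let ?p = "\<lambda>f. \<Prod>j<k. c (f j)"
  let ?sep = "\<lambda>f e. f ` {..<k} \<inter> A e \<noteq> {} \<and> f ` {..<k} - A e \<noteq> {}"
  have "steiner_form n E k c = (\<Sum>f\<in>?P. \<Sum>e\<in>E. if ?sep f e then ?p f else 0)"
    unfolding steiner_form_def
  proof (rule sum.cong[OF refl])
    fix f assume "f \<in> ?P"
    hence "f ` {..<k} \<subseteq> {1..n}" by (auto simp: PiE_iff simp del: atLeastAtMost_iff)
    show "real (steiner {1..n} E (f ` {..<k})) * ?p f = (\<Sum>e\<in>E. if ?sep f e then ?p f else 0)"
      unfolding steiner_eq_sum_separating[OF \<open>f ` {..<k} \<subseteq> {1..n}\<close>] sum_distrib_right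
      by (intro sum.cong) simp_all
  qed
  also have "\<dots> = (\<Sum>e\<in>E. \<Sum>f\<in>?P. if ?sep f e then ?p f else 0)"
    by (rule sum.swap)
  also have "\<dots> = (\<Sum>e\<in>E. (\<Sum>i=1..n. c i) ^ k - (\<Sum>i\<in>A e. c i) ^ k
             - ((\<Sum>i=1..n. c i) - (\<Sum>i\<in>A e. c i)) ^ k)"
  proof (rule sum.cong[OF refl])
    fix e assume "e \<in> E"
    have "{..<k} \<noteq> {}" using assms(2) by (simp add: lessThan_empty_iff)
    from sum_PiE_image_straddles[OF _ this _ cut_side_subset[OF \<open>e \<in> E\<close>], of c]
    show "(\<Sum>f\<in>?P. if ?sep f e then ?p f else 0) = (\<Sum>i=1..n. c i) ^ k - (\<Sum>i\<in>A e. c i) ^ k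
             - ((\<Sum>i=1..n. c i) - (\<Sum>i\<in>A e. c i)) ^ k"
      by simp
  qed
  finally show ?thesis .
qed

end
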